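(* The category $\mathbf{CA}$ of conditional algebras with conditional homomorphisms and the category $\mathbf{CS}$ of conditional spaces with conditional functions are dually equivalent.
   Context: A conditional algebra is $\langle A,\to\rangle$ with $A$ a Boolean algebra and $\to$ binary with $a\to1=1$, $(a\to b)\wedge(a\to c)=a\to(b\wedge c)$, $(a\vee b)\to c\le(a\to c)\wedge(b\to c)$. A conditional homomorphism is a Boolean homomorphism $h$ with $h(a\to b)=h(a)\to h(b)$. A conditional space is $\langle X,\tau,T\rangle$ with $\langle X,\tau\rangle$ a Boolean space and $T\subseteq X\times\mathcal{C}(\tau)\times X$ ($\mathcal{C}(\tau)$ the closed sets) satisfying: (T1) $T(x,Y)=\{y:T(x,Y,y)\}$ is closed for every $x$ and closed $Y$; (T2) for clopen $U,V$, $U\to_T V=\{x:\text{for all closed }Z\subseteq U,\ T(x,Z)\subseteq V\}$ is clopen; (T3) for closed $Y$, $T(x,Y,y)$ iff $T(x,U,y)$ for all clopen $U\supseteq Y$. A conditional function between conditional spaces $\langle X_1,\tau_1,T_1\rangle$, $\langle X_2,\tau_2,T_2\rangle$ is a continuous $f\colon X_1\to X_2$ such that for all $x\in X_1$ and clopen $U,V\subseteq X_2$: $T_1(x,f^{-1}[U])\subseteq f^{-1}[V]$ iff $T_2(f(x),U)\subseteq V$. In both categories composition is composition of maps and identities are identity maps. *)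

theory Defs
  imports "HOL-Analysis.Analysis"
begin

record 'a calg =
  carrier :: "'a set"
  meet :: "'a \<Rightarrow> 'a \<Rightarrow> 'a"
  join :: "'a \<Rightarrow> 'a \<Rightarrow> 'a"
  cmpl :: "'a \<Rightarrow> 'a"
  bot :: "'a"
  top :: "'a"
  imp :: "'a \<Rightarrow> 'a \<Rightarrow> 'a"

definition leq :: "'a calg \<Rightarrow> 'a \<Rightarrow> 'a \<Rightarrow> bool" where
  "leq A a b \<longleftrightarrow> meet A a b = a"

definition boolean_alg :: "'a calg \<Rightarrow> bool" where
  "boolean_alg A \<longleftrightarrow>
     bot A \<in> carrier A \<and> top A \<in> carrier A \<and>
     (\<forall>a\<in>carrier A. \<forall>b\<in>carrier A. meet A a b \<in> carrier A \<and> join A a b \<in> carrier A) \<and>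
     (\<forall>a\<in>carrier A. cmpl A a \<in> carrier A) \<and>
     (\<forall>a\<in>carrier A. \<forall>b\<in>carrier A. meet A a b = meet A b a \<and> join A a b = join A b a) \<and>
     (\<forall>a\<in>carrier A. \<forall>b\<in>carrier A. \<forall>c\<in>carrier A.
        meet A (meet A a b) c = meet A a (meet A b c) \<and>
        join A (join A a b) c = join A a (join A b c) \<and>
        meet A a (join A b c) = join A (meet A a b) (meet A a c) \<and>
        join A a (meet A b c) = meet A (join A a b) (join A a c)) \<and>
     (\<forall>a\<in>carrier A. \<forall>b\<in>carrier A. meet A a (join A a b) = a \<and> join A a (meet A a b) = a) \<and>
     (\<forall>a\<in>carrier A. meet A a (top A) = a \<and> join A a (bot A) = a) \<and>
     (\<forall>a\<in>carrier A. meet A a (cmpl A a) = bot A \<and> join A a (cmpl A a) = top A)"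

definition cond_alg :: "'a calg \<Rightarrow> bool" where
  "cond_alg A \<longleftrightarrow> boolean_alg A \<and>
     (\<forall>a\<in>carrier A. \<forall>b\<in>carrier A. imp A a b \<in> carrier A) \<and>
     (\<forall>a\<in>carrier A. imp A a (top A) = top A) \<and>
     (\<forall>a\<in>carrier A. \<forall>b\<in>carrier A. \<forall>c\<in>carrier A.
        meet A (imp A a b) (imp A a c) = imp A a (meet A b c)) \<and>
     (\<forall>a\<in>carrier A. \<forall>b\<in>carrier A. \<forall>c\<in>carrier A.
        leq A (imp A (join A a b) c) (meet A (imp A a c) (imp A b c)))"

text \<open>Conditional homomorphism (maps are only relevant on the carrier).\<close>
definition cond_hom :: "'a calg \<Rightarrow> 'b calg \<Rightarrow> ('a \<Rightarrow> 'b) \<Rightarrow> bool" where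
  "cond_hom A B h \<longleftrightarrow>
     (\<forall>a\<in>carrier A. h a \<in> carrier B) \<and>
     (\<forall>a\<in>carrier A. \<forall>b\<in>carrier A.
        h (meet A a b) = meet B (h a) (h b) \<and> h (join A a b) = join B (h a) (h b) \<and>
        h (imp A a b) = imp B (h a) (h b)) \<and>
     (\<forall>a\<in>carrier A. h (cmpl A a) = cmpl B (h a)) \<and>
     h (bot A) = bot B \<and> h (top A) = top B"

definition cond_iso :: "'a calg \<Rightarrow> 'b calg \<Rightarrow> bool" where
  "cond_iso A B \<longleftrightarrow> (\<exists>h k. cond_hom A B h \<and> cond_hom B A k \<and>
     (\<forall>a\<in>carrier A. k (h a) = a) \<and> (\<forall>b\<in>carrier B. h (k b) = b))"

definition clopen_in :: "'x topology \<Rightarrow> 'x set \<Rightarrow> bool" where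
  "clopen_in X U \<longleftrightarrow> openin X U \<and> closedin X U"

definition boolean_space :: "'x topology \<Rightarrow> bool" where
  "boolean_space X \<longleftrightarrow> compact_space X \<and> Hausdorff_space X \<and>
     (\<forall>U x. openin X U \<and> x \<in> U \<longrightarrow> (\<exists>V. clopen_in X V \<and> x \<in> V \<and> V \<subseteq> U))"

text \<open>The ternary relation T is represented as a predicate; T(x,Y) is its section.\<close>
definition Tsec :: "('x \<Rightarrow> 'x set \<Rightarrow> 'x \<Rightarrow> bool) \<Rightarrow> 'x \<Rightarrow> 'x set \<Rightarrow> 'x set" where
  "Tsec T x Y = {y. T x Y y}"

definition Timp :: "'x topology \<Rightarrow> ('x \<Rightarrow> 'x set \<Rightarrow> 'x \<Rightarrow> bool) \<Rightarrow> 'x set \<Rightarrow> 'x set \<Rightarrow> 'x set" where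
  "Timp X T U V = {x \<in> topspace X. \<forall>Z. closedin X Z \<and> Z \<subseteq> U \<longrightarrow> Tsec T x Z \<subseteq> V}"

definition cond_space :: "'x topology \<Rightarrow> ('x \<Rightarrow> 'x set \<Rightarrow> 'x \<Rightarrow> bool) \<Rightarrow> bool" where
  "cond_space X T \<longleftrightarrow> boolean_space X \<and>
     \<comment> \<open>T is a subset of X \<times> C(\<tau>) \<times> X\<close>
     (\<forall>x Y y. T x Y y \<longrightarrow> x \<in> topspace X \<and> closedin X Y \<and> y \<in> topspace X) \<and>
     \<comment> \<open>(T1)\<close>
     (\<forall>x Y. x \<in> topspace X \<and> closedin X Y \<longrightarrow> closedin X (Tsec T x Y)) \<and>
     \<comment> \<open>(T2)\<close>
     (\<forall>U V. clopen_in X U \<and> clopen_in X V \<longrightarrow> clopen_in X (Timp X T U V)) \<and>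
     \<comment> \<open>(T3)\<close>
     (\<forall>x Y y. closedin X Y \<longrightarrow>
        (T x Y y \<longleftrightarrow> (\<forall>U. clopen_in X U \<and> Y \<subseteq> U \<longrightarrow> T x U y)))"

definition cond_fun :: "'x topology \<Rightarrow> ('x \<Rightarrow> 'x set \<Rightarrow> 'x \<Rightarrow> bool) \<Rightarrow>
                        'y topology \<Rightarrow> ('y \<Rightarrow> 'y set \<Rightarrow> 'y \<Rightarrow> bool) \<Rightarrow> ('x \<Rightarrow> 'y) \<Rightarrow> bool" where
  "cond_fun X1 T1 X2 T2 f \<longleftrightarrow> continuous_map X1 X2 f \<and>
     (\<forall>x\<in>topspace X1. \<forall>U V. clopen_in X2 U \<and> clopen_in X2 V \<longrightarrow>
        (Tsec T1 x (f -` U \<inter> topspace X1) \<subseteq> f -` V \<inter> topspace X1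
           \<longleftrightarrow> Tsec T2 (f x) U \<subseteq> V))"

definition clop_alg :: "'x topology \<Rightarrow> ('x \<Rightarrow> 'x set \<Rightarrow> 'x \<Rightarrow> bool) \<Rightarrow> 'x set calg" where
  "clop_alg X T = \<lparr> carrier = {U. clopen_in X U}, meet = (\<inter>), join = (\<union>),
     cmpl = (\<lambda>U. topspace X - U), bot = {}, top = topspace X, imp = Timp X T \<rparr>"

definition preim :: "'x topology \<Rightarrow> ('x \<Rightarrow> 'y) \<Rightarrow> 'y set \<Rightarrow> 'x set" where
  "preim X f U = f -` U \<inter> topspace X"

end

theory Submission
  imports Defs
begin

(*
  A conditional space (X, T) is sent to its clopen algebra with U \<rightarrow> V = Timp X T U V, and a
  conditional function to its preimage map; a preimage map preserves \<rightarrow> exactly because of the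
  defining condition of conditional functions.  Faithfulness holds because clopens separate
  the points of a Boolean space.  Fullness: given a homomorphism h of clopen algebras and a
  point x, the clopens U with x \<in> h U form an ultrafilter of clopens, so by compactness some
  point f x lies in all of them; then h is the preimage map of f, and f is continuous because
  the clopens form a base.

  Essential surjectivity is Stone duality extended to \<rightarrow>.  A conditional algebra is isomorphic,
  via a \<mapsto> {ultrafilters containing a}, to the clopen algebra of its Stone space equipped with
  the relation  R x Y y \<longleftrightarrow> (b \<in> y whenever a \<rightarrow> b \<in> x for some a whose image contains Y).
  The crux is that this map turns \<rightarrow> into the operation induced by R: if a \<rightarrow> b \<notin> x, the filter
  {c. a \<rightarrow> c \<in> x} extends to an ultrafilter y avoiding b, and since \<rightarrow> is antitone in its
  first argument, y is an R-successor of x through the image of a.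
*)

section \<open>Boolean algebras on a carrier\<close>

locale bool_algebra =
  fixes A :: "'a calg"
  assumes boolean_alg: "boolean_alg A"
begin

lemma bot_closed [simp]: "bot A \<in> carrier A"
  and top_closed [simp]: "top A \<in> carrier A"
  and meet_closed [simp]: "a \<in> carrier A \<Longrightarrow> b \<in> carrier A \<Longrightarrow> meet A a b \<in> carrier A"
  and join_closed [simp]: "a \<in> carrier A \<Longrightarrow> b \<in> carrier A \<Longrightarrow> join A a b \<in> carrier A"
  and cmpl_closed [simp]: "a \<in> carrier A \<Longrightarrow> cmpl A a \<in> carrier A"
  using boolean_alg unfolding boolean_alg_def by blast+

lemma meet_commute: "a \<in> carrier A \<Longrightarrow> b \<in> carrier A \<Longrightarrow> meet A a b = meet A b a"
  and join_commute: "a \<in> carrier A \<Longrightarrow> b \<in> carrier A \<Longrightarrow> join A a b = join A b a"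
  and meet_assoc: "a \<in> carrier A \<Longrightarrow> b \<in> carrier A \<Longrightarrow> c \<in> carrier A \<Longrightarrow>
    meet A (meet A a b) c = meet A a (meet A b c)"
  and meet_join_distrib: "a \<in> carrier A \<Longrightarrow> b \<in> carrier A \<Longrightarrow> c \<in> carrier A \<Longrightarrow>
    meet A a (join A b c) = join A (meet A a b) (meet A a c)"
  and meet_absorb: "a \<in> carrier A \<Longrightarrow> b \<in> carrier A \<Longrightarrow> meet A a (join A a b) = a"
  and join_absorb: "a \<in> carrier A \<Longrightarrow> b \<in> carrier A \<Longrightarrow> join A a (meet A a b) = a"
  and meet_top [simp]: "a \<in> carrier A \<Longrightarrow> meet A a (top A) = a"
  and join_bot [simp]: "a \<in> carrier A \<Longrightarrow> join A a (bot A) = a"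
  and meet_cmpl [simp]: "a \<in> carrier A \<Longrightarrow> meet A a (cmpl A a) = bot A"
  and join_cmpl [simp]: "a \<in> carrier A \<Longrightarrow> join A a (cmpl A a) = top A"
  using boolean_alg unfolding boolean_alg_def by blast+

lemma meet_idem [simp]: "a \<in> carrier A \<Longrightarrow> meet A a a = a"
  by (metis join_absorb meet_absorb meet_closed)

lemma meet_bot [simp]: "a \<in> carrier A \<Longrightarrow> meet A a (bot A) = bot A"
  by (metis cmpl_closed meet_assoc meet_cmpl meet_idem)

lemma top_meet [simp]: "a \<in> carrier A \<Longrightarrow> meet A (top A) a = a"
  by (metis meet_commute meet_top top_closed)

lemma bot_join [simp]: "a \<in> carrier A \<Longrightarrow> join A (bot A) a = a"
  by (metis bot_closed join_bot join_commute)

lemma leq_refl [simp]: "a \<in> carrier A \<Longrightarrow> leq A a a"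
  by (simp add: leq_def)

lemma leq_top [simp]: "a \<in> carrier A \<Longrightarrow> leq A a (top A)"
  by (simp add: leq_def)

lemma leq_antisym: "a \<in> carrier A \<Longrightarrow> b \<in> carrier A \<Longrightarrow> leq A a b \<Longrightarrow> leq A b a \<Longrightarrow> a = b"
  unfolding leq_def by (metis meet_commute)

lemma leq_trans:
  "a \<in> carrier A \<Longrightarrow> b \<in> carrier A \<Longrightarrow> c \<in> carrier A \<Longrightarrow> leq A a b \<Longrightarrow> leq A b c \<Longrightarrow> leq A a c"
  unfolding leq_def by (metis meet_assoc)

lemma meet_leq1: "a \<in> carrier A \<Longrightarrow> b \<in> carrier A \<Longrightarrow> leq A (meet A a b) a"
  unfolding leq_def by (metis meet_assoc meet_commute meet_idem)

lemma meet_leq2: "a \<in> carrier A \<Longrightarrow> b \<in> carrier A \<Longrightarrow> leq A (meet A a b) b"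
  unfolding leq_def by (metis meet_assoc meet_idem)

lemma leq_meetI:
  "a \<in> carrier A \<Longrightarrow> b \<in> carrier A \<Longrightarrow> c \<in> carrier A \<Longrightarrow> leq A c a \<Longrightarrow> leq A c b \<Longrightarrow>
    leq A c (meet A a b)"
  unfolding leq_def by (metis meet_assoc)

lemma leq_iff_join: "a \<in> carrier A \<Longrightarrow> b \<in> carrier A \<Longrightarrow> leq A a b \<longleftrightarrow> join A a b = b"
  unfolding leq_def by (metis join_absorb join_commute meet_absorb meet_commute)

lemma leq_join1: "a \<in> carrier A \<Longrightarrow> b \<in> carrier A \<Longrightarrow> leq A a (join A a b)"
  unfolding leq_def by (simp add: meet_absorb)

lemma meet_cmpl_split: "a \<in> carrier A \<Longrightarrow> b \<in> carrier A \<Longrightarrow> a = join A (meet A a b) (meet A a (cmpl A b))"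
  using meet_join_distrib [of a b "cmpl A b"] by simp

lemma leq_if_meet_cmpl_eq_bot:
  "a \<in> carrier A \<Longrightarrow> b \<in> carrier A \<Longrightarrow> meet A a (cmpl A b) = bot A \<Longrightarrow> leq A a b"
  unfolding leq_def by (metis join_bot meet_closed meet_cmpl_split)

lemma leq_cmpl_if_meet_eq_bot:
  "a \<in> carrier A \<Longrightarrow> b \<in> carrier A \<Longrightarrow> meet A a b = bot A \<Longrightarrow> leq A a (cmpl A b)"
  unfolding leq_def by (metis bot_closed cmpl_closed join_bot join_commute meet_closed meet_cmpl_split)

lemma leq_bot_iff: "a \<in> carrier A \<Longrightarrow> leq A a (bot A) \<longleftrightarrow> a = bot A"
  unfolding leq_def by auto

section \<open>Filters and ultrafilters\<close>

definition bfilter :: "'a set \<Rightarrow> bool" where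
  "bfilter F \<longleftrightarrow> F \<subseteq> carrier A \<and> top A \<in> F \<and> (\<forall>a\<in>F. \<forall>b\<in>F. meet A a b \<in> F) \<and>
     (\<forall>a\<in>F. \<forall>b\<in>carrier A. leq A a b \<longrightarrow> b \<in> F)"

definition ultrafilter :: "'a set \<Rightarrow> bool" where
  "ultrafilter u \<longleftrightarrow> bfilter u \<and> bot A \<notin> u \<and> (\<forall>a\<in>carrier A. a \<in> u \<or> cmpl A a \<in> u)"

lemma bfilter_subset: "bfilter F \<Longrightarrow> F \<subseteq> carrier A"
  and bfilter_top: "bfilter F \<Longrightarrow> top A \<in> F"
  and bfilter_meet: "bfilter F \<Longrightarrow> a \<in> F \<Longrightarrow> b \<in> F \<Longrightarrow> meet A a b \<in> F"
  and bfilter_up: "bfilter F \<Longrightarrow> a \<in> F \<Longrightarrow> b \<in> carrier A \<Longrightarrow> leq A a b \<Longrightarrow> b \<in> F"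
  unfolding bfilter_def by blast+

lemma principal_bfilter: "a \<in> carrier A \<Longrightarrow> bfilter {b \<in> carrier A. leq A a b}"
  unfolding bfilter_def by (auto intro: leq_meetI leq_trans)

lemma ultrafilter_bfilter: "ultrafilter u \<Longrightarrow> bfilter u"
  and ultrafilter_bot: "ultrafilter u \<Longrightarrow> bot A \<notin> u"
  unfolding ultrafilter_def by blast+

lemma ultrafilter_subset: "ultrafilter u \<Longrightarrow> u \<subseteq> carrier A"
  and ultrafilter_top: "ultrafilter u \<Longrightarrow> top A \<in> u"
  using bfilter_subset bfilter_top ultrafilter_bfilter by blast+

lemma ultrafilter_up: "ultrafilter u \<Longrightarrow> a \<in> u \<Longrightarrow> b \<in> carrier A \<Longrightarrow> leq A a b \<Longrightarrow> b \<in> u"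
  using bfilter_up ultrafilter_bfilter by blast

lemma ultrafilter_meet:
  assumes u: "ultrafilter u" and a: "a \<in> carrier A" and b: "b \<in> carrier A"
  shows "meet A a b \<in> u \<longleftrightarrow> a \<in> u \<and> b \<in> u"
  using ultrafilter_up [OF u _ a meet_leq1 [OF a b]] ultrafilter_up [OF u _ b meet_leq2 [OF a b]]
    bfilter_meet [OF ultrafilter_bfilter [OF u]] by blast

lemma ultrafilter_cmpl:
  assumes u: "ultrafilter u" and a: "a \<in> carrier A"
  shows "cmpl A a \<in> u \<longleftrightarrow> a \<notin> u"
  using u a ultrafilter_meet [OF u a cmpl_closed [OF a]] unfolding ultrafilter_def by auto

lemma ultrafilter_join:
  assumes u: "ultrafilter u" and a: "a \<in> carrier A" and b: "b \<in> carrier A"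
  shows "join A a b \<in> u \<longleftrightarrow> a \<in> u \<or> b \<in> u"
proof
  assume ab: "join A a b \<in> u"
  have "meet A (cmpl A a) (join A a b) = meet A (cmpl A a) b"
    using a b by (simp add: meet_join_distrib meet_commute [of "cmpl A a" a])
  then have "a \<notin> u \<Longrightarrow> meet A (cmpl A a) b \<in> u"
    using u a b ab ultrafilter_cmpl ultrafilter_meet [of u "cmpl A a" "join A a b"] by simp
  then show "a \<in> u \<or> b \<in> u"
    using u a b ultrafilter_meet by auto
next
  assume "a \<in> u \<or> b \<in> u"
  moreover have "leq A a (join A a b)" "leq A b (join A a b)"
    using a b leq_join1 [of a b] leq_join1 [of b a] join_commute [of a b] by simp_all
  ultimately show "join A a b \<in> u"
    using u a b ultrafilter_up by (meson join_closed)
qed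

inductive_set filter_gen :: "'a set \<Rightarrow> 'a set" for S where
  top: "top A \<in> filter_gen S"
| gen: "s \<in> S \<Longrightarrow> s \<in> filter_gen S"
| meet: "a \<in> filter_gen S \<Longrightarrow> b \<in> filter_gen S \<Longrightarrow> meet A a b \<in> filter_gen S"
| up: "a \<in> filter_gen S \<Longrightarrow> b \<in> carrier A \<Longrightarrow> leq A a b \<Longrightarrow> b \<in> filter_gen S"

lemma filter_gen_subset:
  assumes "S \<subseteq> carrier A"
  shows "filter_gen S \<subseteq> carrier A"
proof
  fix a assume "a \<in> filter_gen S"
  then show "a \<in> carrier A"
    by (induction rule: filter_gen.induct) (use assms in auto)
qed

lemma bfilter_filter_gen: "S \<subseteq> carrier A \<Longrightarrow> bfilter (filter_gen S)"
  unfolding bfilter_def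
  by (intro conjI ballI impI filter_gen_subset filter_gen.top filter_gen.meet) (auto intro: filter_gen.up)

lemma meet_mono_left:
  "a \<in> carrier A \<Longrightarrow> b \<in> carrier A \<Longrightarrow> c \<in> carrier A \<Longrightarrow> leq A a b \<Longrightarrow>
    leq A (meet A a c) (meet A b c)"
proof -
  assume a: "a \<in> carrier A" "b \<in> carrier A" "c \<in> carrier A" "leq A a b"
  then have "leq A (meet A a c) b"
    using leq_trans [OF _ _ _ meet_leq1] by simp
  then show ?thesis
    using a by (simp add: leq_meetI meet_leq2)
qed

lemma bfilter_chain_Union:
  assumes "\<C> \<noteq> {}" "\<forall>G\<in>\<C>. bfilter G" "\<forall>G\<in>\<C>. \<forall>H\<in>\<C>. G \<subseteq> H \<or> H \<subseteq> G"
  shows "bfilter (\<Union>\<C>)"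
  unfolding bfilter_def
proof (intro conjI ballI impI)
  show "\<Union>\<C> \<subseteq> carrier A" "top A \<in> \<Union>\<C>"
    using assms(1,2) bfilter_subset bfilter_top by blast+
next
  fix a b assume "a \<in> \<Union>\<C>" "b \<in> \<Union>\<C>"
  then obtain G H where GH: "G \<in> \<C>" "H \<in> \<C>" "a \<in> G" "b \<in> H"
    by blast
  with assms(3) have "a \<in> G \<and> b \<in> G \<or> a \<in> H \<and> b \<in> H"
    by blast
  then show "meet A a b \<in> \<Union>\<C>"
    using assms(2) GH(1,2) bfilter_meet by blast
next
  fix a b assume "a \<in> \<Union>\<C>" "b \<in> carrier A" "leq A a b"
  then show "b \<in> \<Union>\<C>"
    using assms(2) bfilter_up by blast
qed

lemma filter_gen_least:
  assumes "bfilter H" "S \<subseteq> H"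
  shows "filter_gen S \<subseteq> H"
proof
  fix c assume "c \<in> filter_gen S"
  then show "c \<in> H"
    by (induction rule: filter_gen.induct) (use assms bfilter_top bfilter_meet bfilter_up in blast)+
qed

lemma bfilter_meet_upset:
  assumes F: "bfilter F" and a: "a \<in> carrier A"
  shows "bfilter {c \<in> carrier A. \<exists>m\<in>F. leq A (meet A m a) c}"
  unfolding bfilter_def
proof (intro conjI ballI impI)
  have "leq A (meet A (top A) a) (top A)"
    using a by simp
  then show "top A \<in> {c \<in> carrier A. \<exists>m\<in>F. leq A (meet A m a) c}"
    using bfilter_top [OF F] top_closed by blast
next
  fix x y assume "x \<in> {c \<in> carrier A. \<exists>m\<in>F. leq A (meet A m a) c}"
    "y \<in> {c \<in> carrier A. \<exists>m\<in>F. leq A (meet A m a) c}"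
  then obtain m n where xy: "x \<in> carrier A" "y \<in> carrier A"
    and m: "m \<in> F" "leq A (meet A m a) x" and n: "n \<in> F" "leq A (meet A n a) y"
    by blast
  have mn: "m \<in> carrier A" "n \<in> carrier A"
    using bfilter_subset [OF F] m(1) n(1) by auto
  let ?k = "meet A (meet A m n) a"
  have "leq A ?k (meet A m a)" "leq A ?k (meet A n a)"
    using mn a meet_mono_left meet_leq1 meet_leq2 by simp_all
  then have "leq A ?k x" "leq A ?k y"
    using leq_trans [of ?k "meet A m a" x] leq_trans [of ?k "meet A n a" y] m n mn xy a by simp_all
  then have "leq A ?k (meet A x y)"
    using mn xy a leq_meetI by simp
  moreover have "meet A m n \<in> F"
    using F m(1) n(1) by (rule bfilter_meet)
  ultimately have "\<exists>m\<in>F. leq A (meet A m a) (meet A x y)"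
    by blast
  then show "meet A x y \<in> {c \<in> carrier A. \<exists>m\<in>F. leq A (meet A m a) c}"
    using xy by simp
next
  fix x y assume x: "x \<in> {c \<in> carrier A. \<exists>m\<in>F. leq A (meet A m a) c}" and y: "y \<in> carrier A" "leq A x y"
  then obtain m where m: "m \<in> F" "leq A (meet A m a) x"
    by blast
  have "m \<in> carrier A"
    using bfilter_subset [OF F] m(1) by blast
  then have "leq A (meet A m a) y"
    using a x y m(2) leq_trans [of "meet A m a" x y] by simp
  then show "y \<in> {c \<in> carrier A. \<exists>m\<in>F. leq A (meet A m a) c}"
    using m(1) y(1) by blast
qed auto

lemma filter_gen_insert_bot:
  assumes F: "bfilter F" and a: "a \<in> carrier A" and bot: "bot A \<in> filter_gen (insert a F)"
  obtains m where "m \<in> F" "m \<in> carrier A" "meet A m a = bot A"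
proof -
  have "insert a F \<subseteq> {c \<in> carrier A. \<exists>m\<in>F. leq A (meet A m a) c}"
  proof
    fix s assume s: "s \<in> insert a F"
    have "s \<in> carrier A \<and> (\<exists>m\<in>F. leq A (meet A m a) s)"
    proof (cases "s = a")
      case True
      then have "leq A (meet A (top A) a) s"
        using a by simp
      then show ?thesis
        using a True bfilter_top [OF F] by blast
    next
      case False
      then have "s \<in> F"
        using s by simp
      then have "s \<in> carrier A"
        using bfilter_subset [OF F] by blast
      then have "leq A (meet A s a) s"
        using a meet_leq1 by simp
      then show ?thesis
        using \<open>s \<in> carrier A\<close> \<open>s \<in> F\<close> by blast
    qed
    then show "s \<in> {c \<in> carrier A. \<exists>m\<in>F. leq A (meet A m a) c}"
      by simp
  qed
  then have "bot A \<in> {c \<in> carrier A. \<exists>m\<in>F. leq A (meet A m a) c}"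
    using filter_gen_least [OF bfilter_meet_upset [OF F a]] bot by blast
  then obtain m where m: "m \<in> F" "leq A (meet A m a) (bot A)"
    by blast
  moreover have "m \<in> carrier A"
    using bfilter_subset [OF F] m(1) by blast
  ultimately show thesis
    using that a leq_bot_iff [of "meet A m a"] by simp
qed

lemma maximal_bfilter_exists:
  assumes F: "bfilter F" and bot: "bot A \<notin> F"
  obtains M where "bfilter M" "F \<subseteq> M" "bot A \<notin> M"
    "\<And>G. bfilter G \<Longrightarrow> bot A \<notin> G \<Longrightarrow> M \<subseteq> G \<Longrightarrow> G = M"
proof -
  let ?P = "{G. bfilter G \<and> F \<subseteq> G \<and> bot A \<notin> G}"
  have "\<exists>M\<in>?P. \<forall>G\<in>?P. M \<subseteq> G \<longrightarrow> G = M"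
  proof (rule Zorn_Lemma2, intro ballI)
    fix \<C> assume \<C>: "\<C> \<in> chains ?P"
    show "\<exists>U\<in>?P. \<forall>G\<in>\<C>. G \<subseteq> U"
    proof (cases "\<C> = {}")
      case True
      have "F \<in> ?P"
        using F bot by simp
      then show ?thesis
        using True by blast
    next
      case False
      have sub: "\<C> \<subseteq> ?P" and lin: "\<forall>G\<in>\<C>. \<forall>H\<in>\<C>. G \<subseteq> H \<or> H \<subseteq> G"
        using \<C> unfolding chains_def chain_subset_def by blast+
      have "bfilter (\<Union>\<C>)"
        using False sub lin by (intro bfilter_chain_Union) auto
      moreover have "F \<subseteq> \<Union>\<C>" "bot A \<notin> \<Union>\<C>"
        using False sub by auto
      ultimately show ?thesis
        by (intro bexI [of _ "\<Union>\<C>"]) auto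
    qed
  qed
  then obtain M where M: "M \<in> ?P" and max: "\<forall>G\<in>?P. M \<subseteq> G \<longrightarrow> G = M" ..
  show thesis
  proof (rule that)
    show "bfilter M" "F \<subseteq> M" "bot A \<notin> M"
      using M by simp_all
  next
    fix G assume G: "bfilter G" "bot A \<notin> G" "M \<subseteq> G"
    then have "G \<in> ?P"
      using M by auto
    then show "G = M"
      using max G(3) by blast
  qed
qed

lemma ultrafilter_if_maximal:
  assumes M: "bfilter M" "bot A \<notin> M"
    and max: "\<And>G. bfilter G \<Longrightarrow> bot A \<notin> G \<Longrightarrow> M \<subseteq> G \<Longrightarrow> G = M"
  shows "ultrafilter M"
  unfolding ultrafilter_def
proof (intro conjI ballI M)
  fix a assume a: "a \<in> carrier A"
  show "a \<in> M \<or> cmpl A a \<in> M"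
  proof (rule disjCI)
    assume na: "cmpl A a \<notin> M"
    let ?G = "filter_gen (insert a M)"
    have "bfilter ?G"
      using bfilter_subset [OF M(1)] a by (simp add: bfilter_filter_gen)
    moreover have "bot A \<notin> ?G"
    proof
      assume "bot A \<in> ?G"
      then obtain m where m: "m \<in> M" "m \<in> carrier A" "meet A m a = bot A"
        by (rule filter_gen_insert_bot [OF M(1) a])
      then have "leq A m (cmpl A a)"
        using a by (simp add: leq_cmpl_if_meet_eq_bot)
      then show False
        using bfilter_up [OF M(1) m(1)] a na by simp
    qed
    moreover have "M \<subseteq> ?G"
      by (auto intro: filter_gen.gen)
    ultimately have "?G = M"
      by (rule max)
    moreover have "a \<in> ?G"
      by (auto intro: filter_gen.gen)
    ultimately show "a \<in> M"
      by simp
  qed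
qed

lemma ultrafilter_exists:
  assumes "bfilter F" "bot A \<notin> F"
  shows "\<exists>u. ultrafilter u \<and> F \<subseteq> u"
proof -
  obtain M where M: "bfilter M" "F \<subseteq> M" "bot A \<notin> M"
    and max: "\<And>G. bfilter G \<Longrightarrow> bot A \<notin> G \<Longrightarrow> M \<subseteq> G \<Longrightarrow> G = M"
    using maximal_bfilter_exists [OF assms] by blast
  have "ultrafilter M"
    using M(1,3) max by (rule ultrafilter_if_maximal)
  then show ?thesis
    using M(2) by blast
qed

lemma ultrafilter_avoiding:
  assumes F: "bfilter F" and b: "b \<in> carrier A" "b \<notin> F"
  shows "\<exists>u. ultrafilter u \<and> F \<subseteq> u \<and> b \<notin> u"
proof -
  let ?G = "filter_gen (insert (cmpl A b) F)"
  have "bot A \<notin> ?G"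
  proof
    assume "bot A \<in> ?G"
    then obtain m where m: "m \<in> F" "m \<in> carrier A" "meet A m (cmpl A b) = bot A"
      by (rule filter_gen_insert_bot [OF F cmpl_closed [OF b(1)]])
    then have "leq A m b"
      using b(1) by (simp add: leq_if_meet_cmpl_eq_bot)
    then show False
      using bfilter_up [OF F m(1) b(1)] b(2) by simp
  qed
  moreover have "bfilter ?G"
    using bfilter_subset [OF F] b(1) by (simp add: bfilter_filter_gen)
  ultimately obtain u where u: "ultrafilter u" "?G \<subseteq> u"
    using ultrafilter_exists by blast
  moreover have "insert (cmpl A b) F \<subseteq> ?G"
    by (auto intro: filter_gen.gen)
  ultimately show ?thesis
    using b(1) ultrafilter_cmpl by blast
qed

lemma filter_gen_finite:
  assumes "c \<in> filter_gen S"
  shows "\<exists>J. finite J \<and> J \<subseteq> S \<and> (\<forall>u. ultrafilter u \<and> J \<subseteq> u \<longrightarrow> c \<in> u)"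
  using assms
proof (induction rule: filter_gen.induct)
  case top
  show ?case
    using ultrafilter_top by (intro exI [of _ "{}"]) simp
next
  case (gen s)
  show ?case
    using gen by (intro exI [of _ "{s}"]) simp
next
  case (meet a b)
  obtain J where J: "finite J" "J \<subseteq> S" "\<forall>u. ultrafilter u \<and> J \<subseteq> u \<longrightarrow> a \<in> u"
    using meet.IH(1) by blast
  obtain K where K: "finite K" "K \<subseteq> S" "\<forall>u. ultrafilter u \<and> K \<subseteq> u \<longrightarrow> b \<in> u"
    using meet.IH(2) by blast
  have "meet A a b \<in> u" if "ultrafilter u" "J \<union> K \<subseteq> u" for u
    using that J(3) K(3) bfilter_meet [OF ultrafilter_bfilter [OF that(1)]] by simp
  then show ?case
    using J(1,2) K(1,2) by (intro exI [of _ "J \<union> K"]) simp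
next
  case (up a b)
  obtain J where J: "finite J" "J \<subseteq> S" "\<forall>u. ultrafilter u \<and> J \<subseteq> u \<longrightarrow> a \<in> u"
    using up.IH by blast
  have "b \<in> u" if "ultrafilter u" "J \<subseteq> u" for u
    using ultrafilter_up [OF that(1) _ up.hyps(2,3)] J(3) that by blast
  then show ?case
    using J(1,2) by blast
qed

end

section \<open>Compact and Boolean spaces\<close>

lemma compact_space_from_base:
  assumes base: "\<And>U x. openin X U \<Longrightarrow> x \<in> U \<Longrightarrow> \<exists>B\<in>\<B>. x \<in> B \<and> B \<subseteq> U"
    and covers: "\<And>\<C>. \<C> \<subseteq> \<B> \<Longrightarrow> topspace X \<subseteq> \<Union>\<C> \<Longrightarrow>
      \<exists>\<F>. finite \<F> \<and> \<F> \<subseteq> \<C> \<and> topspace X \<subseteq> \<Union>\<F>"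
  shows "compact_space X"
  unfolding compact_space_alt
proof (intro allI impI, elim conjE)
  fix \<U> assume opens: "\<forall>U\<in>\<U>. openin X U" and cover: "topspace X \<subseteq> \<Union>\<U>"
  let ?\<C> = "{B \<in> \<B>. \<exists>U\<in>\<U>. B \<subseteq> U}"
  have "topspace X \<subseteq> \<Union>?\<C>"
  proof
    fix x assume x: "x \<in> topspace X"
    obtain U where U: "U \<in> \<U>" "x \<in> U"
      using subsetD [OF cover x] by (rule UnionE)
    moreover have "openin X U"
      using opens U(1) by blast
    ultimately obtain B where "B \<in> \<B>" "x \<in> B" "B \<subseteq> U"
      using base by blast
    then show "x \<in> \<Union>?\<C>"
      using U(1) by blast
  qed
  from covers [OF _ this] obtain \<F> where \<F>: "finite \<F>" "\<F> \<subseteq> ?\<C>" "topspace X \<subseteq> \<Union>\<F>"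
    by blast
  have "\<forall>B\<in>\<F>. \<exists>U. U \<in> \<U> \<and> B \<subseteq> U"
    using \<F>(2) by blast
  from bchoice [OF this] obtain g where g: "\<forall>B\<in>\<F>. g B \<in> \<U> \<and> B \<subseteq> g B"
    by blast
  have "finite (g ` \<F>)"
    using \<F>(1) by (rule finite_imageI)
  moreover have "g ` \<F> \<subseteq> \<U>"
    using g by (simp add: image_subset_iff)
  moreover have "\<Union>\<F> \<subseteq> \<Union>(g ` \<F>)"
    using g by (intro Union_subsetI) blast
  then have "topspace X \<subseteq> \<Union>(g ` \<F>)"
    using \<F>(3) by (rule subset_trans [rotated])
  ultimately show "\<exists>\<F>. finite \<F> \<and> \<F> \<subseteq> \<U> \<and> topspace X \<subseteq> \<Union>\<F>"
    by (intro exI [of _ "g ` \<F>"] conjI)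
qed

lemma clopen_in_subset: "clopen_in X U \<Longrightarrow> U \<subseteq> topspace X"
  unfolding clopen_in_def by (simp add: openin_subset)

lemma clopen_in_diff: "clopen_in X U \<Longrightarrow> clopen_in X (topspace X - U)"
  unfolding clopen_in_def by auto

lemma boolean_space_separate_points:
  assumes X: "boolean_space X" and xy: "x \<in> topspace X" "y \<in> topspace X" "x \<noteq> y"
  obtains U where "clopen_in X U" "x \<in> U" "y \<notin> U"
proof -
  obtain U V where UV: "openin X U" "openin X V" "x \<in> U" "y \<in> V" "disjnt U V"
    using X xy unfolding boolean_space_def Hausdorff_space_def by blast
  then obtain W where "clopen_in X W" "x \<in> W" "W \<subseteq> U"
    using X unfolding boolean_space_def by blast
  with UV show thesis
    using that unfolding disjnt_def by blast
qed

lemma openin_boolean_space: "boolean_space X \<Longrightarrow> openin X = arbitrary union_of (clopen_in X)"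
  unfolding boolean_space_def openin_topology_base_unique clopen_in_def by blast

lemma compact_space_closed_filter_point:
  assumes X: "compact_space X" and closed: "\<And>U. U \<in> K \<Longrightarrow> closedin X U"
    and top: "topspace X \<in> K" and not_empty: "{} \<notin> K"
    and Int: "\<And>U V. U \<in> K \<Longrightarrow> V \<in> K \<Longrightarrow> U \<inter> V \<in> K"
  obtains y where "y \<in> topspace X" "\<And>U. U \<in> K \<Longrightarrow> y \<in> U"
proof -
  have fin: "topspace X \<inter> \<Inter>\<F> \<in> K" if "finite \<F>" "\<F> \<subseteq> K" for \<F>
    using that
  proof (induction \<F> rule: finite_induct)
    case (insert U \<F>)
    then have "topspace X \<inter> \<Inter>(insert U \<F>) = U \<inter> (topspace X \<inter> \<Inter>\<F>)"
      using closedin_subset [OF closed] by blast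
    then show ?case
      using insert Int by simp
  qed (use top in simp)
  have "\<Inter>K \<noteq> {}"
  proof (rule compact_space_fip [THEN iffD1, OF X, rule_format], intro conjI ballI allI impI)
    fix \<F> assume \<F>: "finite \<F> \<and> \<F> \<subseteq> K"
    then have "topspace X \<inter> \<Inter>\<F> \<noteq> {}"
      using fin not_empty by metis
    then show "\<Inter>\<F> \<noteq> {}"
      by blast
  qed (use closed in blast)
  then obtain y where "\<And>U. U \<in> K \<Longrightarrow> y \<in> U"
    by blast
  moreover have "y \<in> topspace X"
    using top calculation by blast
  ultimately show thesis
    using that by blast
qed

lemma compact_space_clopen_ultrafilter_point:
  assumes X: "compact_space X"
    and top: "P (topspace X)" and not_empty: "\<not> P {}"
    and Int: "\<And>U V. clopen_in X U \<Longrightarrow> clopen_in X V \<Longrightarrow> P U \<Longrightarrow> P V \<Longrightarrow> P (U \<inter> V)"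
    and cmpl: "\<And>U. clopen_in X U \<Longrightarrow> P U \<or> P (topspace X - U)"
  obtains y where "y \<in> topspace X" "\<And>U. clopen_in X U \<Longrightarrow> y \<in> U \<longleftrightarrow> P U"
proof -
  let ?K = "{U. clopen_in X U \<and> P U}"
  obtain y where y: "y \<in> topspace X" "\<And>U. U \<in> ?K \<Longrightarrow> y \<in> U"
  proof (rule compact_space_closed_filter_point [OF X])
    show "topspace X \<in> ?K" "{} \<notin> ?K"
      using top not_empty by (simp_all add: clopen_in_def)
    show "U \<inter> V \<in> ?K" if "U \<in> ?K" "V \<in> ?K" for U V
      using that Int by (auto simp: clopen_in_def)
  qed (auto simp: clopen_in_def intro: that)
  have "y \<in> U \<longleftrightarrow> P U" if U: "clopen_in X U" for U
  proof
    assume "y \<in> U"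
    show "P U"
    proof (rule ccontr)
      assume "\<not> P U"
      then have "topspace X - U \<in> ?K"
        using U cmpl clopen_in_diff by blast
      then show False
        using y(2) \<open>y \<in> U\<close> by blast
    qed
  qed (use U y(2) in blast)
  then show thesis
    using that y(1) by blast
qed

section \<open>The Stone space of a Boolean algebra\<close>

context bool_algebra
begin

definition ultrafilters :: "'a set set" where
  "ultrafilters = {u. ultrafilter u}"

definition stone_map :: "'a \<Rightarrow> 'a set set" where
  "stone_map a = {u. ultrafilter u \<and> a \<in> u}"

lemma stone_map_subset: "stone_map a \<subseteq> ultrafilters"
  unfolding stone_map_def ultrafilters_def by blast

lemma stone_map_top: "stone_map (top A) = ultrafilters"
  unfolding stone_map_def ultrafilters_def using ultrafilter_top by blast

lemma stone_map_bot: "stone_map (bot A) = {}"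
  unfolding stone_map_def using ultrafilter_bot by blast

lemma stone_map_meet: "a \<in> carrier A \<Longrightarrow> b \<in> carrier A \<Longrightarrow> stone_map (meet A a b) = stone_map a \<inter> stone_map b"
  unfolding stone_map_def using ultrafilter_meet by blast

lemma stone_map_join: "a \<in> carrier A \<Longrightarrow> b \<in> carrier A \<Longrightarrow> stone_map (join A a b) = stone_map a \<union> stone_map b"
  unfolding stone_map_def using ultrafilter_join by blast

lemma stone_map_cmpl: "a \<in> carrier A \<Longrightarrow> stone_map (cmpl A a) = ultrafilters - stone_map a"
  unfolding stone_map_def ultrafilters_def using ultrafilter_cmpl by blast

lemma stone_map_subset_iff:
  assumes a: "a \<in> carrier A" and b: "b \<in> carrier A"
  shows "stone_map a \<subseteq> stone_map b \<longleftrightarrow> leq A a b"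
proof
  assume ab: "stone_map a \<subseteq> stone_map b"
  show "leq A a b"
  proof (rule ccontr)
    assume "\<not> leq A a b"
    then obtain u where "ultrafilter u" "{c \<in> carrier A. leq A a c} \<subseteq> u" "b \<notin> u"
      using ultrafilter_avoiding [OF principal_bfilter [OF a] b] by blast
    then show False
      using a ab unfolding stone_map_def by auto
  qed
next
  assume "leq A a b"
  then show "stone_map a \<subseteq> stone_map b"
    unfolding stone_map_def using b ultrafilter_up by blast
qed

lemma inj_on_stone_map: "inj_on stone_map (carrier A)"
proof (rule inj_onI)
  fix a b assume "a \<in> carrier A" "b \<in> carrier A" "stone_map a = stone_map b"
  then show "a = b"
    using stone_map_subset_iff [of a b] stone_map_subset_iff [of b a] leq_antisym by simp
qed

definition stone_space :: "'a set topology" where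
  "stone_space = topology (arbitrary union_of (\<lambda>U. \<exists>a\<in>carrier A. U = stone_map a))"

lemma openin_stone_space:
  "openin stone_space U \<longleftrightarrow> (\<forall>u\<in>U. \<exists>a\<in>carrier A. u \<in> stone_map a \<and> stone_map a \<subseteq> U)"
proof -
  have "istopology (arbitrary union_of (\<lambda>U. \<exists>a\<in>carrier A. U = stone_map a))"
    by (rule istopology_base) (metis meet_closed stone_map_meet)
  then have "openin stone_space = arbitrary union_of (\<lambda>U. \<exists>a\<in>carrier A. U = stone_map a)"
    unfolding stone_space_def by simp
  then show ?thesis
    by (simp add: arbitrary_union_of_alt) blast
qed

lemma openin_stone_map: "a \<in> carrier A \<Longrightarrow> openin stone_space (stone_map a)"
  unfolding openin_stone_space by blast

lemma topspace_stone_space: "topspace stone_space = ultrafilters"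
proof
  show "topspace stone_space \<subseteq> ultrafilters"
    unfolding topspace_def openin_stone_space using stone_map_subset by blast
  show "ultrafilters \<subseteq> topspace stone_space"
    using openin_stone_map [OF top_closed] openin_subset stone_map_top by metis
qed

lemma clopen_stone_map: "a \<in> carrier A \<Longrightarrow> clopen_in stone_space (stone_map a)"
  unfolding clopen_in_def closedin_def topspace_stone_space
  using openin_stone_map [of a] openin_stone_map [of "cmpl A a"] stone_map_cmpl [of a] stone_map_subset [of a]
  by simp

lemma bot_in_filter_gen_cmpl_if_cover:
  assumes I: "I \<subseteq> carrier A" and cover: "ultrafilters \<subseteq> \<Union>(stone_map ` I)"
  shows "bot A \<in> filter_gen (cmpl A ` I)"
proof (rule ccontr)
  assume "bot A \<notin> filter_gen (cmpl A ` I)"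
  moreover have "cmpl A ` I \<subseteq> carrier A"
    using I by auto
  ultimately obtain u where u: "ultrafilter u" "filter_gen (cmpl A ` I) \<subseteq> u"
    using ultrafilter_exists bfilter_filter_gen by blast
  then have "u \<in> \<Union>(stone_map ` I)"
    using cover by (auto simp: ultrafilters_def)
  then obtain a where a: "a \<in> I" "a \<in> u"
    by (auto simp: stone_map_def)
  moreover have "cmpl A a \<in> u"
    using u(2) filter_gen.gen [OF imageI [OF a(1)]] by (rule subsetD)
  ultimately show False
    using ultrafilter_cmpl [OF u(1) subsetD [OF I a(1)]] by simp
qed

lemma stone_map_cover_finite:
  assumes I: "I \<subseteq> carrier A" and cover: "ultrafilters \<subseteq> \<Union>(stone_map ` I)"
  shows "\<exists>J. finite J \<and> J \<subseteq> I \<and> ultrafilters \<subseteq> \<Union>(stone_map ` J)"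
proof -
  from filter_gen_finite [OF bot_in_filter_gen_cmpl_if_cover [OF I cover]] obtain K
    where K: "finite K" "K \<subseteq> cmpl A ` I" "\<forall>u. ultrafilter u \<and> K \<subseteq> u \<longrightarrow> bot A \<in> u"
    by blast
  obtain J where J: "J \<subseteq> I" "finite J" "K = cmpl A ` J"
    using finite_subset_image [OF K(1,2)] by blast
  have "u \<in> \<Union>(stone_map ` J)" if "u \<in> ultrafilters" for u
  proof -
    have u: "ultrafilter u"
      using that by (simp add: ultrafilters_def)
    have "\<not> cmpl A ` J \<subseteq> u"
    proof
      assume "cmpl A ` J \<subseteq> u"
      then have "bot A \<in> u"
        using K(3) J(3) u by simp
      then show False
        using ultrafilter_bot [OF u] by simp
    qed
    then obtain a where a: "a \<in> J" "cmpl A a \<notin> u"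
      unfolding image_subset_iff by blast
    then have "u \<in> stone_map a"
      using u ultrafilter_cmpl [OF u] J(1) I by (auto simp: stone_map_def)
    then show ?thesis
      using a(1) by (rule UN_I [rotated])
  qed
  then show ?thesis
    using J(1,2) by blast
qed

lemma compact_space_stone: "compact_space stone_space"
proof (rule compact_space_from_base)
  fix U u assume "openin stone_space U" "u \<in> U"
  then obtain a where "a \<in> carrier A" "u \<in> stone_map a" "stone_map a \<subseteq> U"
    unfolding openin_stone_space by blast
  then show "\<exists>B\<in>stone_map ` carrier A. u \<in> B \<and> B \<subseteq> U"
    by (intro bexI [of _ "stone_map a"] conjI imageI)
next
  fix \<C> assume \<C>: "\<C> \<subseteq> stone_map ` carrier A" "topspace stone_space \<subseteq> \<Union>\<C>"
  let ?I = "{a \<in> carrier A. stone_map a \<in> \<C>}"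
  have "\<C> \<subseteq> stone_map ` ?I"
    using \<C>(1) by (auto simp: image_iff)
  then have "\<Union>\<C> \<subseteq> \<Union>(stone_map ` ?I)"
    by (rule Union_mono)
  with \<C>(2) have "ultrafilters \<subseteq> \<Union>(stone_map ` ?I)"
    unfolding topspace_stone_space by (rule subset_trans)
  from stone_map_cover_finite [OF _ this] obtain J
    where J: "finite J" "J \<subseteq> ?I" "ultrafilters \<subseteq> \<Union>(stone_map ` J)"
    by blast
  have "finite (stone_map ` J)"
    using J(1) by (rule finite_imageI)
  moreover have "stone_map ` J \<subseteq> \<C>"
    using J(2) by blast
  ultimately show "\<exists>\<F>. finite \<F> \<and> \<F> \<subseteq> \<C> \<and> topspace stone_space \<subseteq> \<Union>\<F>"
    using J(3) topspace_stone_space by (intro exI [of _ "stone_map ` J"] conjI) simp_all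
qed

lemma Hausdorff_space_stone: "Hausdorff_space stone_space"
proof -
  have separate: "\<exists>U V. openin stone_space U \<and> openin stone_space V \<and> u \<in> U \<and> v \<in> V \<and> disjnt U V"
    if "ultrafilter u" "ultrafilter v" "a \<in> carrier A" "a \<in> u" "a \<notin> v" for u v a
  proof -
    have "u \<in> stone_map a" "v \<in> stone_map (cmpl A a)"
      using that ultrafilter_cmpl unfolding stone_map_def by auto
    moreover have "disjnt (stone_map a) (stone_map (cmpl A a))"
      using that(3) stone_map_cmpl unfolding disjnt_def by blast
    moreover have "openin stone_space (stone_map a)" "openin stone_space (stone_map (cmpl A a))"
      using that(3) openin_stone_map by simp_all
    ultimately show ?thesis
      by (intro exI [of _ "stone_map a"] exI [of _ "stone_map (cmpl A a)"] conjI)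
  qed
  show ?thesis
    unfolding Hausdorff_space_def topspace_stone_space
  proof (intro allI impI, elim conjE)
    fix u v assume "u \<in> ultrafilters" "v \<in> ultrafilters" "u \<noteq> v"
    then have u: "ultrafilter u" and v: "ultrafilter v" and "\<not> (\<forall>a. a \<in> u \<longleftrightarrow> a \<in> v)"
      by (simp_all add: ultrafilters_def set_eq_iff)
    then obtain a where a: "a \<in> u \<longleftrightarrow> a \<notin> v"
      by blast
    then have "a \<in> carrier A"
      using ultrafilter_subset [OF u] ultrafilter_subset [OF v] by blast
    show "\<exists>U V. openin stone_space U \<and> openin stone_space V \<and> u \<in> U \<and> v \<in> V \<and> disjnt U V"
    proof (cases "a \<in> u")
      case True
      then show ?thesis
        using separate [OF u v \<open>a \<in> carrier A\<close>] a by simp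
    next
      case False
      then obtain U V where "openin stone_space U" "openin stone_space V" "v \<in> U" "u \<in> V" "disjnt U V"
        using separate [OF v u \<open>a \<in> carrier A\<close>] a by auto
      then show ?thesis
        using disjnt_sym by blast
    qed
  qed
qed

lemma boolean_space_stone: "boolean_space stone_space"
  unfolding boolean_space_def
proof (intro conjI compact_space_stone Hausdorff_space_stone allI impI)
  fix U u assume "openin stone_space U \<and> u \<in> U"
  then obtain a where "a \<in> carrier A" "u \<in> stone_map a" "stone_map a \<subseteq> U"
    unfolding openin_stone_space by blast
  then show "\<exists>V. clopen_in stone_space V \<and> u \<in> V \<and> V \<subseteq> U"
    using clopen_stone_map by (intro exI [of _ "stone_map a"]) simp
qed

lemma Union_stone_map:
  "finite J \<Longrightarrow> J \<subseteq> carrier A \<Longrightarrow> \<exists>a\<in>carrier A. \<Union>(stone_map ` J) = stone_map a"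
proof (induction J rule: finite_induct)
  case empty
  show ?case
    using stone_map_bot by (intro bexI [of _ "bot A"]) simp_all
next
  case (insert b J)
  then obtain a where "a \<in> carrier A" "\<Union>(stone_map ` J) = stone_map a"
    by blast
  moreover have "b \<in> carrier A"
    using insert.prems by simp
  ultimately show ?case
    using stone_map_join [of b a] by (intro bexI [of _ "join A b a"]) simp_all
qed

lemma clopen_in_stone_space_iff: "clopen_in stone_space U \<longleftrightarrow> (\<exists>a\<in>carrier A. U = stone_map a)"
proof
  assume U: "clopen_in stone_space U"
  let ?I = "{a \<in> carrier A. stone_map a \<subseteq> U}"
  have "compactin stone_space U"
    using U closedin_compact_space compact_space_stone unfolding clopen_in_def by blast
  moreover have "openin stone_space V" if "V \<in> stone_map ` ?I" for V
    using that openin_stone_map by blast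
  moreover have "U \<subseteq> \<Union>(stone_map ` ?I)"
  proof
    fix u assume "u \<in> U"
    then obtain a where "a \<in> carrier A" "u \<in> stone_map a" "stone_map a \<subseteq> U"
      using U unfolding clopen_in_def openin_stone_space by blast
    then show "u \<in> \<Union>(stone_map ` ?I)"
      by blast
  qed
  ultimately have "\<exists>\<F>. finite \<F> \<and> \<F> \<subseteq> stone_map ` ?I \<and> U \<subseteq> \<Union>\<F>"
    by (rule compactinD)
  then obtain \<F> where \<F>: "finite \<F>" "\<F> \<subseteq> stone_map ` ?I" "U \<subseteq> \<Union>\<F>"
    by blast
  obtain J where J: "J \<subseteq> ?I" "finite J" "\<F> = stone_map ` J"
    using finite_subset_image [OF \<F>(1,2)] by blast
  have "U = \<Union>(stone_map ` J)"
    using \<F>(3) J by blast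
  moreover obtain a where "a \<in> carrier A" "\<Union>(stone_map ` J) = stone_map a"
    using Union_stone_map [OF J(2)] J(1) by blast
  ultimately show "\<exists>a\<in>carrier A. U = stone_map a"
    by blast
qed (use clopen_stone_map in blast)

end

section \<open>The canonical conditional space of a conditional algebra\<close>

locale cond_algebra = bool_algebra +
  assumes cond_alg: "cond_alg A"
begin

lemma imp_closed [simp]: "a \<in> carrier A \<Longrightarrow> b \<in> carrier A \<Longrightarrow> imp A a b \<in> carrier A"
  and imp_top: "a \<in> carrier A \<Longrightarrow> imp A a (top A) = top A"
  and imp_meet: "a \<in> carrier A \<Longrightarrow> b \<in> carrier A \<Longrightarrow> c \<in> carrier A \<Longrightarrow>
    meet A (imp A a b) (imp A a c) = imp A a (meet A b c)"
  and imp_join_leq: "a \<in> carrier A \<Longrightarrow> b \<in> carrier A \<Longrightarrow> c \<in> carrier A \<Longrightarrow>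
    leq A (imp A (join A a b) c) (meet A (imp A a c) (imp A b c))"
  using cond_alg unfolding cond_alg_def by blast+

lemma imp_antimono:
  assumes "a \<in> carrier A" "a' \<in> carrier A" "c \<in> carrier A" "leq A a a'"
  shows "leq A (imp A a' c) (imp A a c)"
proof -
  have "join A a a' = a'"
    using assms leq_iff_join by simp
  then have "leq A (imp A a' c) (meet A (imp A a c) (imp A a' c))"
    using assms imp_join_leq [of a a' c] by simp
  then show ?thesis
    using assms leq_trans [OF _ _ _ _ meet_leq1] by simp
qed

lemma imp_mono:
  "a \<in> carrier A \<Longrightarrow> b \<in> carrier A \<Longrightarrow> c \<in> carrier A \<Longrightarrow> leq A b c \<Longrightarrow> leq A (imp A a b) (imp A a c)"
  unfolding leq_def by (simp add: imp_meet)

lemma imp_bfilter: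
  assumes a: "a \<in> carrier A" and x: "ultrafilter x"
  shows "bfilter {c \<in> carrier A. imp A a c \<in> x}"
  unfolding bfilter_def
proof (intro conjI ballI impI)
  show "top A \<in> {c \<in> carrier A. imp A a c \<in> x}"
    using a x imp_top ultrafilter_top by simp
next
  fix b c assume "b \<in> {c \<in> carrier A. imp A a c \<in> x}" "c \<in> {c \<in> carrier A. imp A a c \<in> x}"
  then show "meet A b c \<in> {c \<in> carrier A. imp A a c \<in> x}"
    using a x imp_meet [of a b c] ultrafilter_meet [of x "imp A a b" "imp A a c"] by simp
next
  fix b c assume b: "b \<in> {c \<in> carrier A. imp A a c \<in> x}" and c: "c \<in> carrier A" "leq A b c"
  then have "leq A (imp A a b) (imp A a c)"
    using a imp_mono by simp
  then show "c \<in> {c \<in> carrier A. imp A a c \<in> x}"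
    using a b c x ultrafilter_up [of x "imp A a b" "imp A a c"] by simp
qed auto

definition canonical_rel :: "'a set \<Rightarrow> 'a set set \<Rightarrow> 'a set \<Rightarrow> bool" where
  "canonical_rel x Y y \<longleftrightarrow> x \<in> ultrafilters \<and> y \<in> ultrafilters \<and> closedin stone_space Y \<and>
     (\<forall>a\<in>carrier A. Y \<subseteq> stone_map a \<longrightarrow> (\<forall>b\<in>carrier A. imp A a b \<in> x \<longrightarrow> b \<in> y))"

lemma canonical_rel_witness:
  assumes x: "ultrafilter x" and a: "a \<in> carrier A" and b: "b \<in> carrier A" and ab: "imp A a b \<notin> x"
  obtains y where "canonical_rel x (stone_map a) y" "b \<notin> y"
proof -
  obtain y where y: "ultrafilter y" "{c \<in> carrier A. imp A a c \<in> x} \<subseteq> y" "b \<notin> y"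
    using ultrafilter_avoiding [OF imp_bfilter [OF a x] b] ab by blast
  have "canonical_rel x (stone_map a) y"
    unfolding canonical_rel_def
  proof (intro conjI ballI impI)
    show "x \<in> ultrafilters" "y \<in> ultrafilters"
      using x y(1) by (simp_all add: ultrafilters_def)
    show "closedin stone_space (stone_map a)"
      using clopen_stone_map [OF a] by (simp add: clopen_in_def)
  next
    fix a' c assume a': "a' \<in> carrier A" "stone_map a \<subseteq> stone_map a'"
      and c: "c \<in> carrier A" "imp A a' c \<in> x"
    have "leq A (imp A a' c) (imp A a c)"
      using a a' c imp_antimono stone_map_subset_iff by simp
    then have "imp A a c \<in> x"
      using ultrafilter_up [OF x c(2)] a c(1) by simp
    then show "c \<in> y"
      using y(2) c(1) by blast
  qed
  then show thesis
    using that y(3) by blast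
qed

lemma Timp_stone_map:
  assumes a: "a \<in> carrier A" and b: "b \<in> carrier A"
  shows "Timp stone_space canonical_rel (stone_map a) (stone_map b) = stone_map (imp A a b)"
proof
  show "Timp stone_space canonical_rel (stone_map a) (stone_map b) \<subseteq> stone_map (imp A a b)"
  proof
    fix x assume "x \<in> Timp stone_space canonical_rel (stone_map a) (stone_map b)"
    then have x: "ultrafilter x" and Tx: "Tsec canonical_rel x (stone_map a) \<subseteq> stone_map b"
      using clopen_stone_map [OF a]
      unfolding Timp_def topspace_stone_space clopen_in_def ultrafilters_def by auto
    show "x \<in> stone_map (imp A a b)"
    proof (rule ccontr)
      assume "x \<notin> stone_map (imp A a b)"
      then obtain y where "canonical_rel x (stone_map a) y" "b \<notin> y"
        using canonical_rel_witness [OF x a b] x unfolding stone_map_def by blast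
      then show False
        using Tx unfolding Tsec_def stone_map_def by blast
    qed
  qed
next
  show "stone_map (imp A a b) \<subseteq> Timp stone_space canonical_rel (stone_map a) (stone_map b)"
  proof
    fix x assume x: "x \<in> stone_map (imp A a b)"
    have "Tsec canonical_rel x Z \<subseteq> stone_map b" if "Z \<subseteq> stone_map a" for Z
      using that a b x unfolding Tsec_def canonical_rel_def stone_map_def ultrafilters_def by auto
    moreover have "x \<in> topspace stone_space"
      using x stone_map_subset topspace_stone_space by blast
    ultimately show "x \<in> Timp stone_space canonical_rel (stone_map a) (stone_map b)"
      unfolding Timp_def by blast
  qed
qed

lemma Tsec_canonical_rel:
  assumes "closedin stone_space Y" "x \<in> ultrafilters"
  shows "Tsec canonical_rel x Y =
    ultrafilters \<inter> \<Inter>{stone_map b | b. b \<in> carrier A \<and> (\<exists>a\<in>carrier A. Y \<subseteq> stone_map a \<and> imp A a b \<in> x)}"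
  using assms unfolding Tsec_def canonical_rel_def stone_map_def ultrafilters_def by auto

lemma closedin_Tsec_canonical_rel:
  assumes x: "x \<in> ultrafilters" and Y: "closedin stone_space Y"
  shows "closedin stone_space (Tsec canonical_rel x Y)"
proof -
  let ?B = "{stone_map b | b. b \<in> carrier A \<and> (\<exists>a\<in>carrier A. Y \<subseteq> stone_map a \<and> imp A a b \<in> x)}"
  have "closedin stone_space (\<Inter>(insert ultrafilters ?B))"
    using clopen_stone_map unfolding clopen_in_def
    by (intro closedin_Inter) (auto simp flip: topspace_stone_space)
  then show ?thesis
    using Tsec_canonical_rel [OF Y x] by simp
qed

lemma canonical_rel_iff_clopen:
  assumes Y: "closedin stone_space Y"
  shows "canonical_rel x Y y \<longleftrightarrow> (\<forall>U. clopen_in stone_space U \<and> Y \<subseteq> U \<longrightarrow> canonical_rel x U y)"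
proof
  assume "canonical_rel x Y y"
  then show "\<forall>U. clopen_in stone_space U \<and> Y \<subseteq> U \<longrightarrow> canonical_rel x U y"
    unfolding canonical_rel_def clopen_in_def by blast
next
  assume H: "\<forall>U. clopen_in stone_space U \<and> Y \<subseteq> U \<longrightarrow> canonical_rel x U y"
  have "Y \<subseteq> ultrafilters"
    using closedin_subset [OF Y] by (simp add: topspace_stone_space)
  then have "canonical_rel x ultrafilters y"
    using H clopen_stone_map [OF top_closed] by (simp add: stone_map_top)
  then have xy: "x \<in> ultrafilters" "y \<in> ultrafilters"
    unfolding canonical_rel_def by simp_all
  show "canonical_rel x Y y"
    unfolding canonical_rel_def
  proof (intro conjI xy Y ballI impI)
    fix a b assume a: "a \<in> carrier A" "Y \<subseteq> stone_map a" and b: "b \<in> carrier A" "imp A a b \<in> x"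
    have "canonical_rel x (stone_map a) y"
      using H a clopen_stone_map by blast
    then show "b \<in> y"
      using a(1) b unfolding canonical_rel_def by blast
  qed
qed

lemma cond_space_stone: "cond_space stone_space canonical_rel"
proof -
  have dom: "\<forall>x Y y. canonical_rel x Y y \<longrightarrow>
      x \<in> topspace stone_space \<and> closedin stone_space Y \<and> y \<in> topspace stone_space"
    by (simp add: canonical_rel_def topspace_stone_space)
  have T1: "\<forall>x Y. x \<in> topspace stone_space \<and> closedin stone_space Y \<longrightarrow>
      closedin stone_space (Tsec canonical_rel x Y)"
    using closedin_Tsec_canonical_rel by (simp add: topspace_stone_space)
  have T2: "\<forall>U V. clopen_in stone_space U \<and> clopen_in stone_space V \<longrightarrow>
      clopen_in stone_space (Timp stone_space canonical_rel U V)"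
  proof (intro allI impI, elim conjE)
    fix U V assume U: "clopen_in stone_space U" and V: "clopen_in stone_space V"
    obtain a where "a \<in> carrier A" "U = stone_map a"
      using U unfolding clopen_in_stone_space_iff ..
    moreover obtain b where "b \<in> carrier A" "V = stone_map b"
      using V unfolding clopen_in_stone_space_iff ..
    ultimately show "clopen_in stone_space (Timp stone_space canonical_rel U V)"
      using Timp_stone_map clopen_stone_map by simp
  qed
  have T3: "\<forall>x Y y. closedin stone_space Y \<longrightarrow>
      (canonical_rel x Y y \<longleftrightarrow> (\<forall>U. clopen_in stone_space U \<and> Y \<subseteq> U \<longrightarrow> canonical_rel x U y))"
    using canonical_rel_iff_clopen by blast
  show ?thesis
    unfolding cond_space_def using boolean_space_stone dom T1 T2 T3 by blast
qed

lemma cond_hom_stone_map: "cond_hom A (clop_alg stone_space canonical_rel) stone_map"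
  unfolding cond_hom_def clop_alg_def
  by (simp add: clopen_stone_map stone_map_meet stone_map_join Timp_stone_map stone_map_cmpl
      topspace_stone_space stone_map_bot stone_map_top)

lemma bij_betw_stone_map: "bij_betw stone_map (carrier A) (carrier (clop_alg stone_space canonical_rel))"
  unfolding bij_betw_def clop_alg_def
  using inj_on_stone_map clopen_in_stone_space_iff by auto

end

lemma cond_iso_if_bij_betw:
  assumes A: "cond_alg A" and h: "cond_hom A B h" and bij: "bij_betw h (carrier A) (carrier B)"
  shows "cond_iso A B"
proof -
  interpret cond_algebra A
    using A by unfold_locales (simp_all add: cond_alg_def)
  define k where "k = the_inv_into (carrier A) h"
  have k_closed: "k b \<in> carrier A" if "b \<in> carrier B" for b
    using bij that unfolding k_def bij_betw_def by (simp add: the_inv_into_into)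
  have h_k: "h (k b) = b" if "b \<in> carrier B" for b
    using bij that unfolding k_def bij_betw_def by (simp add: f_the_inv_into_f)
  have k_h: "k (h a) = a" if "a \<in> carrier A" for a
    using bij that unfolding k_def bij_betw_def by (simp add: the_inv_into_f_f)
  have h_ops: "\<And>a b. a \<in> carrier A \<Longrightarrow> b \<in> carrier A \<Longrightarrow>
      h (meet A a b) = meet B (h a) (h b) \<and> h (join A a b) = join B (h a) (h b) \<and>
      h (imp A a b) = imp B (h a) (h b)"
    and h_cmpl: "\<And>a. a \<in> carrier A \<Longrightarrow> h (cmpl A a) = cmpl B (h a)"
    and h_bot: "h (bot A) = bot B" and h_top: "h (top A) = top B"
    using h unfolding cond_hom_def by blast+
  have "cond_hom B A k"
    unfolding cond_hom_def
  proof (intro conjI ballI)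
    fix b c assume b: "b \<in> carrier B" and c: "c \<in> carrier B"
    show "k (meet B b c) = meet A (k b) (k c)"
      using h_ops [OF k_closed [OF b] k_closed [OF c]] h_k b c k_h k_closed by (metis meet_closed)
    show "k (join B b c) = join A (k b) (k c)"
      using h_ops [OF k_closed [OF b] k_closed [OF c]] h_k b c k_h k_closed by (metis join_closed)
    show "k (imp B b c) = imp A (k b) (k c)"
      using h_ops [OF k_closed [OF b] k_closed [OF c]] h_k b c k_h k_closed by (metis imp_closed)
  next
    fix b assume b: "b \<in> carrier B"
    show "k (cmpl B b) = cmpl A (k b)"
      using h_cmpl [OF k_closed [OF b]] h_k [OF b] k_h cmpl_closed [OF k_closed [OF b]] by metis
  qed (use k_closed k_h h_bot h_top in \<open>metis bot_closed top_closed\<close>)+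
  then show ?thesis
    unfolding cond_iso_def using h k_h h_k by blast
qed

lemma (in cond_algebra) cond_iso_stone: "cond_iso A (clop_alg stone_space canonical_rel)"
  using cond_alg cond_hom_stone_map bij_betw_stone_map by (rule cond_iso_if_bij_betw)

section \<open>Clopen algebras of conditional spaces\<close>

lemma boolean_alg_clop_alg: "boolean_alg (clop_alg X T)"
  unfolding boolean_alg_def clop_alg_def clopen_in_def
  using openin_subset by auto

lemma cond_space_boolean_space: "cond_space X T \<Longrightarrow> boolean_space X"
  and cond_space_Tsec_subset: "cond_space X T \<Longrightarrow> Tsec T x Y \<subseteq> topspace X"
  and cond_space_Timp_clopen:
    "cond_space X T \<Longrightarrow> clopen_in X U \<Longrightarrow> clopen_in X V \<Longrightarrow> clopen_in X (Timp X T U V)"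
  and cond_space_rel_mono:
    "cond_space X T \<Longrightarrow> closedin X Y \<Longrightarrow> clopen_in X U \<Longrightarrow> Y \<subseteq> U \<Longrightarrow> T x Y y \<Longrightarrow> T x U y"
  unfolding cond_space_def Tsec_def by blast+

lemma Timp_clopen_eq:
  assumes X: "cond_space X T" and U: "clopen_in X U"
  shows "Timp X T U V = {x \<in> topspace X. Tsec T x U \<subseteq> V}"
proof
  show "Timp X T U V \<subseteq> {x \<in> topspace X. Tsec T x U \<subseteq> V}"
    using U unfolding Timp_def clopen_in_def by blast
  show "{x \<in> topspace X. Tsec T x U \<subseteq> V} \<subseteq> Timp X T U V"
    using cond_space_rel_mono [OF X _ U] unfolding Timp_def Tsec_def by blast
qed

lemma cond_alg_clop_alg:
  assumes X: "cond_space X T"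
  shows "cond_alg (clop_alg X T)"
proof -
  have "Timp X T U (topspace X) = topspace X" for U
    using cond_space_Tsec_subset [OF X] unfolding Timp_def by blast
  moreover have "Timp X T U V \<inter> Timp X T U W = Timp X T U (V \<inter> W)" for U V W
    unfolding Timp_def by blast
  moreover have "Timp X T (U \<union> V) W \<subseteq> Timp X T U W \<inter> Timp X T V W" for U V W
    unfolding Timp_def by blast
  ultimately show ?thesis
    using boolean_alg_clop_alg cond_space_Timp_clopen [OF X]
    unfolding cond_alg_def leq_def by (simp add: clop_alg_def Int_absorb2)
qed

lemma preim_eq: "preim X f U = {x \<in> topspace X. f x \<in> U}"
  unfolding preim_def by blast

lemma clopen_in_preim: "continuous_map X Y f \<Longrightarrow> clopen_in Y U \<Longrightarrow> clopen_in X (preim X f U)"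
  unfolding clopen_in_def preim_eq
  using openin_continuous_map_preimage closedin_continuous_map_preimage by blast

lemma preim_Timp:
  assumes X: "cond_space X T" and Y: "cond_space Y S" and f: "cond_fun X T Y S f"
    and U: "clopen_in Y U" and V: "clopen_in Y V"
  shows "preim X f (Timp Y S U V) = Timp X T (preim X f U) (preim X f V)"
proof -
  have cont: "continuous_map X Y f"
    using f unfolding cond_fun_def by blast
  have "preim X f (Timp Y S U V) = {x \<in> topspace X. Tsec S (f x) U \<subseteq> V}"
    using continuous_map_image_subset_topspace [OF cont]
    unfolding preim_eq Timp_clopen_eq [OF Y U] by blast
  also have "\<dots> = {x \<in> topspace X. Tsec T x (preim X f U) \<subseteq> preim X f V}"
    using f U V unfolding cond_fun_def preim_def by blast
  also have "\<dots> = Timp X T (preim X f U) (preim X f V)"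
    using Timp_clopen_eq [OF X clopen_in_preim [OF cont U]] by simp
  finally show ?thesis .
qed

lemma cond_hom_preim:
  assumes X: "cond_space X T" and Y: "cond_space Y S" and f: "cond_fun X T Y S f"
  shows "cond_hom (clop_alg Y S) (clop_alg X T) (preim X f)"
proof -
  have cont: "continuous_map X Y f"
    using f unfolding cond_fun_def by blast
  then have "f x \<in> topspace Y" if "x \<in> topspace X" for x
    using that continuous_map_image_subset_topspace by blast
  then show ?thesis
    using clopen_in_preim [OF cont] preim_Timp [OF X Y f]
    unfolding cond_hom_def clop_alg_def by (auto simp: preim_def)
qed

lemma preim_id: "U \<subseteq> topspace X \<Longrightarrow> preim X id U = U"
  unfolding preim_def by auto

lemma preim_comp:
  "continuous_map X Y f \<Longrightarrow> preim X (g \<circ> f) U = preim X f (preim Y g U)"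
  unfolding preim_def using continuous_map_image_subset_topspace by fastforce

lemma eq_on_if_preim_eq:
  assumes Y: "boolean_space Y" and f: "continuous_map X Y f" and g: "continuous_map X Y g"
    and eq: "\<And>U. clopen_in Y U \<Longrightarrow> preim X f U = preim X g U"
    and x: "x \<in> topspace X"
  shows "f x = g x"
proof (rule ccontr)
  assume "f x \<noteq> g x"
  moreover have "f x \<in> topspace Y" "g x \<in> topspace Y"
    using f g x continuous_map_image_subset_topspace by blast+
  ultimately obtain U where "clopen_in Y U" "f x \<in> U" "g x \<notin> U"
    using boolean_space_separate_points [OF Y] by metis
  then show False
    using eq x unfolding preim_def by blast
qed

lemma cond_hom_clop_alg_point:
  assumes Y: "compact_space Y" and h: "cond_hom (clop_alg Y S) (clop_alg X T) h"
    and x: "x \<in> topspace X"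
  obtains y where "y \<in> topspace Y" "\<And>U. clopen_in Y U \<Longrightarrow> y \<in> U \<longleftrightarrow> x \<in> h U"
proof (rule compact_space_clopen_ultrafilter_point [OF Y, of "\<lambda>U. x \<in> h U"])
  show "x \<in> h (topspace Y)" "x \<notin> h {}"
    using x h unfolding cond_hom_def clop_alg_def by simp_all
  show "x \<in> h (U \<inter> V)" if "clopen_in Y U" "clopen_in Y V" "x \<in> h U" "x \<in> h V" for U V
    using that h unfolding cond_hom_def clop_alg_def by simp
  show "x \<in> h U \<or> x \<in> h (topspace Y - U)" if "clopen_in Y U" for U
    using that x h unfolding cond_hom_def clop_alg_def by simp
qed (rule that)

lemma cond_hom_clop_alg_eq_preim:
  assumes X: "cond_space X T" and Y: "cond_space Y S"
    and h: "cond_hom (clop_alg Y S) (clop_alg X T) h"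
  obtains f where "cond_fun X T Y S f" "\<And>U. clopen_in Y U \<Longrightarrow> h U = preim X f U"
proof -
  have h_clopen: "\<And>U. clopen_in Y U \<Longrightarrow> clopen_in X (h U)"
    and h_Timp: "\<And>U V. clopen_in Y U \<Longrightarrow> clopen_in Y V \<Longrightarrow> h (Timp Y S U V) = Timp X T (h U) (h V)"
    using h unfolding cond_hom_def clop_alg_def by simp_all
  have Y_compact: "compact_space Y"
    using cond_space_boolean_space [OF Y] unfolding boolean_space_def by blast
  have "\<forall>x\<in>topspace X. \<exists>y. y \<in> topspace Y \<and> (\<forall>U. clopen_in Y U \<longrightarrow> (y \<in> U \<longleftrightarrow> x \<in> h U))"
    using cond_hom_clop_alg_point [OF Y_compact h] by metis
  then obtain f where f: "\<And>x. x \<in> topspace X \<Longrightarrow>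
      f x \<in> topspace Y \<and> (\<forall>U. clopen_in Y U \<longrightarrow> (f x \<in> U \<longleftrightarrow> x \<in> h U))"
    by metis
  have h_preim: "h U = preim X f U" if U: "clopen_in Y U" for U
    using clopen_in_subset [OF h_clopen [OF U]] f U unfolding preim_def by blast
  have cont: "continuous_map X Y f"
  proof (rule continuous_map_into_topology_base [OF openin_boolean_space [OF cond_space_boolean_space [OF Y]]])
    show "f x \<in> topspace Y" if "x \<in> topspace X" for x
      using f that by blast
    show "openin X {x \<in> topspace X. f x \<in> U}" if "clopen_in Y U" for U
      using h_clopen [OF that] h_preim [OF that] unfolding clopen_in_def preim_eq by simp
  qed
  have "cond_fun X T Y S f"
    unfolding cond_fun_def
  proof (intro conjI cont ballI allI impI, elim conjE)
    fix x U V assume x: "x \<in> topspace X" and U: "clopen_in Y U" and V: "clopen_in Y V"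
    have "Tsec T x (h U) \<subseteq> h V \<longleftrightarrow> x \<in> Timp X T (h U) (h V)"
      using x Timp_clopen_eq [OF X h_clopen [OF U]] by blast
    also have "\<dots> \<longleftrightarrow> x \<in> h (Timp Y S U V)"
      using h_Timp [OF U V] by simp
    also have "\<dots> \<longleftrightarrow> f x \<in> Timp Y S U V"
      using f [OF x] cond_space_Timp_clopen [OF Y U V] by blast
    also have "\<dots> \<longleftrightarrow> Tsec S (f x) U \<subseteq> V"
      using f [OF x] Timp_clopen_eq [OF Y U] by blast
    finally show "Tsec T x (f -` U \<inter> topspace X) \<subseteq> f -` V \<inter> topspace X \<longleftrightarrow> Tsec S (f x) U \<subseteq> V"
      using h_preim [OF U] h_preim [OF V] unfolding preim_def by simp
  qed
  then show thesis
    using that h_preim by blast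
qed

theorem theorem6p5:
  shows
  "\<comment> \<open>the functor Clop : CS \<rightarrow> CA is well defined on objects\<close>
   (\<forall>(X::'x topology) T. cond_space X T \<longrightarrow> cond_alg (clop_alg X T)) \<and>
   \<comment> \<open>... and on morphisms, contravariantly (f \<mapsto> f\<inverse>)\<close>
   (\<forall>(X1::'x topology) T1 (X2::'y topology) T2 f.
      cond_space X1 T1 \<and> cond_space X2 T2 \<and> cond_fun X1 T1 X2 T2 f \<longrightarrow>
      cond_hom (clop_alg X2 T2) (clop_alg X1 T1) (preim X1 f)) \<and>
   \<comment> \<open>it preserves identities\<close>
   (\<forall>(X::'x topology) T. cond_space X T \<longrightarrow>
      (\<forall>U\<in>carrier (clop_alg X T). preim X id U = U)) \<and>
   \<comment> \<open>and reverses composition\<close>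
   (\<forall>(X1::'x topology) T1 (X2::'y topology) T2 (X3::'z topology) T3 f g.
      cond_space X1 T1 \<and> cond_space X2 T2 \<and> cond_space X3 T3 \<and>
      cond_fun X1 T1 X2 T2 f \<and> cond_fun X2 T2 X3 T3 g \<longrightarrow>
      (\<forall>U\<in>carrier (clop_alg X3 T3). preim X1 (g \<circ> f) U = preim X1 f (preim X2 g U))) \<and>
   \<comment> \<open>faithful\<close>
   (\<forall>(X1::'x topology) T1 (X2::'y topology) T2 f g.
      cond_space X1 T1 \<and> cond_space X2 T2 \<and>
      cond_fun X1 T1 X2 T2 f \<and> cond_fun X1 T1 X2 T2 g \<and>
      (\<forall>U\<in>carrier (clop_alg X2 T2). preim X1 f U = preim X1 g U) \<longrightarrow>
      (\<forall>x\<in>topspace X1. f x = g x)) \<and>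
   \<comment> \<open>full\<close>
   (\<forall>(X1::'x topology) T1 (X2::'y topology) T2 h.
      cond_space X1 T1 \<and> cond_space X2 T2 \<and>
      cond_hom (clop_alg X2 T2) (clop_alg X1 T1) h \<longrightarrow>
      (\<exists>f. cond_fun X1 T1 X2 T2 f \<and> (\<forall>U\<in>carrier (clop_alg X2 T2). h U = preim X1 f U))) \<and>
   \<comment> \<open>essentially surjective\<close>
   (\<forall>A::'a calg. cond_alg A \<longrightarrow>
      (\<exists>(X::'a set topology) T. cond_space X T \<and> cond_iso A (clop_alg X T)))"
proof ((intro conjI allI impI ballI; (elim conjE)?), goal_cases)
  case (1 X T)
  then show ?case by (rule cond_alg_clop_alg)
next
  case (2 X1 T1 X2 T2 f)
  then show ?case by (rule cond_hom_preim)
next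
  case (3 X T U)
  then show ?case by (simp add: preim_id clop_alg_def clopen_in_subset)
next
  case (4 X1 T1 X2 T2 X3 T3 f g U)
  then show ?case by (simp add: preim_comp cond_fun_def)
next
  case (5 X1 T1 X2 T2 f g x)
  show ?case
    by (rule eq_on_if_preim_eq [OF cond_space_boolean_space [OF \<open>cond_space X2 T2\<close>]])
      (use 5 in \<open>auto simp: cond_fun_def clop_alg_def\<close>)
next
  case (6 X1 T1 X2 T2 h)
  obtain f where "cond_fun X1 T1 X2 T2 f" "\<And>U. clopen_in X2 U \<Longrightarrow> h U = preim X1 f U"
    using cond_hom_clop_alg_eq_preim [OF 6] by blast
  then show ?case by (auto simp: clop_alg_def)
next
  case (7 A)
  then interpret cond_algebra A by unfold_locales (simp_all add: cond_alg_def)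
  show ?case using cond_space_stone cond_iso_stone by blast
qed


end
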